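(* Let $G$ be a connected graph. Then $\mathcal{Z}^{\mathrm{TE}}_+(G)=\mathcal{Z}^{\mathrm{TS}}_+(G)$ if and only if $G\cong K_n$ for some $n$.
   Context: PSD forcing: vertices are colored blue or white; if $B$ is the current set of blue vertices, $C$ a connected component of $G-B$, and $u$ a blue vertex with $N_G(u)\cap V(C)=\{v\}$, then $u$ may force $v$ to become blue. A PSD forcing set is a set of initially blue vertices from which repeated application of this rule turns every vertex blue; $\mathrm{Z}_+(G)$ is the minimum size of a PSD forcing set. $\mathcal{Z}^{\mathrm{TE}}_+(G)$ has as vertices the minimum PSD forcing sets of $G$, with $S_1S_2$ an edge iff $S_1\setminus S_2=\{v_1\}$ and $S_2\setminus S_1=\{v_2\}$ for some vertices $v_1,v_2$; $\mathcal{Z}^{\mathrm{TS}}_+(G)$ has the same vertex set with the additional adjacency requirement $v_1v_2\in E(G)$. *)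

theory Defs
  imports Main
begin

definition simple_graph :: "'a set \<Rightarrow> ('a \<Rightarrow> 'a \<Rightarrow> bool) \<Rightarrow> bool" where
  "simple_graph V E \<longleftrightarrow> finite V \<and> (\<forall>x y. E x y \<longrightarrow> x \<in> V \<and> y \<in> V)
     \<and> (\<forall>x y. E x y \<longrightarrow> E y x) \<and> (\<forall>x. \<not> E x x)"

definition reach_in :: "'a set \<Rightarrow> ('a \<Rightarrow> 'a \<Rightarrow> bool) \<Rightarrow> 'a \<Rightarrow> 'a \<Rightarrow> bool" where
  "reach_in W E = (\<lambda>x y. x \<in> W \<and> y \<in> W \<and> E x y)\<^sup>*\<^sup>*"

definition connected_graph :: "'a set \<Rightarrow> ('a \<Rightarrow> 'a \<Rightarrow> bool) \<Rightarrow> bool" where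
  "connected_graph V E \<longleftrightarrow> simple_graph V E \<and> V \<noteq> {}
     \<and> (\<forall>x\<in>V. \<forall>y\<in>V. reach_in V E x y)"

definition components_minus :: "'a set \<Rightarrow> ('a \<Rightarrow> 'a \<Rightarrow> bool) \<Rightarrow> 'a set \<Rightarrow> 'a set set" where
  "components_minus V E B = {{y. reach_in (V - B) E w y} | w. w \<in> V - B}"

definition psd_force_step :: "'a set \<Rightarrow> ('a \<Rightarrow> 'a \<Rightarrow> bool) \<Rightarrow> 'a set \<Rightarrow> 'a set \<Rightarrow> bool" where
  "psd_force_step V E B B' \<longleftrightarrow> (\<exists>C u v. C \<in> components_minus V E B \<and> u \<in> B
     \<and> {w. E u w} \<inter> C = {v} \<and> B' = insert v B)"

definition psd_forcing_set :: "'a set \<Rightarrow> ('a \<Rightarrow> 'a \<Rightarrow> bool) \<Rightarrow> 'a set \<Rightarrow> bool" where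
  "psd_forcing_set V E S \<longleftrightarrow> S \<subseteq> V \<and> (\<exists>B. (psd_force_step V E)\<^sup>*\<^sup>* S B \<and> V \<subseteq> B)"

definition Z_plus :: "'a set \<Rightarrow> ('a \<Rightarrow> 'a \<Rightarrow> bool) \<Rightarrow> nat" where
  "Z_plus V E = (LEAST k. \<exists>S. psd_forcing_set V E S \<and> card S = k)"

definition min_psd_forcing_sets :: "'a set \<Rightarrow> ('a \<Rightarrow> 'a \<Rightarrow> bool) \<Rightarrow> 'a set set" where
  "min_psd_forcing_sets V E = {S. psd_forcing_set V E S \<and> card S = Z_plus V E}"

text \<open>Token exchange and token sliding reconfiguration graphs, as
  (vertex set, adjacency relation) pairs.\<close>
definition ZTE_plus :: "'a set \<Rightarrow> ('a \<Rightarrow> 'a \<Rightarrow> bool) \<Rightarrow> 'a set set \<times> ('a set \<Rightarrow> 'a set \<Rightarrow> bool)" where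
  "ZTE_plus V E = (min_psd_forcing_sets V E,
     \<lambda>S1 S2. S1 \<in> min_psd_forcing_sets V E \<and> S2 \<in> min_psd_forcing_sets V E
       \<and> (\<exists>v1 v2. S1 - S2 = {v1} \<and> S2 - S1 = {v2}))"

definition ZTS_plus :: "'a set \<Rightarrow> ('a \<Rightarrow> 'a \<Rightarrow> bool) \<Rightarrow> 'a set set \<times> ('a set \<Rightarrow> 'a set \<Rightarrow> bool)" where
  "ZTS_plus V E = (min_psd_forcing_sets V E,
     \<lambda>S1 S2. S1 \<in> min_psd_forcing_sets V E \<and> S2 \<in> min_psd_forcing_sets V E
       \<and> (\<exists>v1 v2. S1 - S2 = {v1} \<and> S2 - S1 = {v2} \<and> E v1 v2))"

definition graph_iso :: "'a set \<Rightarrow> ('a \<Rightarrow> 'a \<Rightarrow> bool) \<Rightarrow> 'b set \<Rightarrow> ('b \<Rightarrow> 'b \<Rightarrow> bool) \<Rightarrow> bool" where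
  "graph_iso V E W F \<longleftrightarrow> (\<exists>f. bij_betw f V W \<and> (\<forall>x\<in>V. \<forall>y\<in>V. E x y \<longleftrightarrow> F (f x) (f y)))"

definition K_verts :: "nat \<Rightarrow> nat set" where "K_verts n = {0..<n}"
definition K_edges :: "nat \<Rightarrow> nat \<Rightarrow> nat \<Rightarrow> bool" where
  "K_edges n x y \<longleftrightarrow> x < n \<and> y < n \<and> x \<noteq> y"

end

theory Submission
  imports Defs
begin

text \<open>Suppose every token exchange between minimum PSD forcing sets is a token slide. If a
  vertex u of a minimum forcing set S forces v into a component C of G - S, then exchanging u
  for v gives another minimum forcing set, since v forces u back. Comparing two such exchanges
  shows that u forces into only one component, and that two vertices of S forcing the same
  vertex are adjacent. Exchanges along forces shrink components, so some minimum S leaves an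
  isolated white vertex v, whose neighbourhood is then a clique; a further exchange argument
  shows that every vertex at distance two from v is adjacent to v. By connectivity every vertex
  is v or a neighbour of v, so G is complete.\<close>

lemma reach_in_refl [simp]: "reach_in W E x x"
  by (simp add: reach_in_def)

lemma reach_in_trans: "reach_in W E x y \<Longrightarrow> reach_in W E y z \<Longrightarrow> reach_in W E x z"
  unfolding reach_in_def by (rule rtranclp_trans)

lemma reach_in_snoc: "reach_in W E x y \<Longrightarrow> y \<in> W \<Longrightarrow> z \<in> W \<Longrightarrow> E y z \<Longrightarrow> reach_in W E x z"
  unfolding reach_in_def by (simp add: rtranclp.rtrancl_into_rtrancl)

lemma reach_in_mem: "reach_in W E x y \<Longrightarrow> x \<noteq> y \<Longrightarrow> y \<in> W"
  unfolding reach_in_def by (induction rule: rtranclp_induct) auto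

lemma reach_in_mono: "W \<subseteq> W' \<Longrightarrow> reach_in W E x y \<Longrightarrow> reach_in W' E x y"
  unfolding reach_in_def by (erule mono_rtranclp[rule_format, rotated]) auto

lemma reach_in_closed_neighbourhood:
  assumes "reach_in W E v x" and "\<And>w y. E v w \<Longrightarrow> E w y \<Longrightarrow> y \<noteq> v \<Longrightarrow> E v y"
  shows "x = v \<or> E v x"
  using assms(1) unfolding reach_in_def
  by (induction rule: rtranclp_induct) (use assms(2) in blast)+

definition complete_graph :: "'a set \<Rightarrow> ('a \<Rightarrow> 'a \<Rightarrow> bool) \<Rightarrow> bool" where
  "complete_graph V E \<longleftrightarrow> (\<forall>x\<in>V. \<forall>y\<in>V. x \<noteq> y \<longrightarrow> E x y)"

definition exchanges_are_slides :: "'a set \<Rightarrow> ('a \<Rightarrow> 'a \<Rightarrow> bool) \<Rightarrow> bool" where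
  "exchanges_are_slides V E \<longleftrightarrow>
    (\<forall>S1\<in>min_psd_forcing_sets V E. \<forall>S2\<in>min_psd_forcing_sets V E. \<forall>a b.
       S1 - S2 = {a} \<longrightarrow> S2 - S1 = {b} \<longrightarrow> E a b)"

lemma min_psd_forcing_set_subset: "S \<in> min_psd_forcing_sets V E \<Longrightarrow> S \<subseteq> V"
  by (simp add: min_psd_forcing_sets_def psd_forcing_set_def)

lemma min_psd_forcing_set_exists: "\<exists>S. S \<in> min_psd_forcing_sets V E"
proof -
  have "psd_forcing_set V E V"
    by (auto simp: psd_forcing_set_def)
  then have "\<exists>k S. psd_forcing_set V E S \<and> card S = k"
    by blast
  from LeastI_ex[OF this] show ?thesis
    by (auto simp: min_psd_forcing_sets_def Z_plus_def)
qed

lemma Z_plus_le_card: "psd_forcing_set V E S \<Longrightarrow> Z_plus V E \<le> card S"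
  unfolding Z_plus_def by (rule Least_le) blast

lemma ZTE_plus_eq_ZTS_plus_iff: "ZTE_plus V E = ZTS_plus V E \<longleftrightarrow> exchanges_are_slides V E"
  unfolding exchanges_are_slides_def
proof
  assume eq: "ZTE_plus V E = ZTS_plus V E"
  show "\<forall>S1\<in>min_psd_forcing_sets V E. \<forall>S2\<in>min_psd_forcing_sets V E. \<forall>a b.
      S1 - S2 = {a} \<longrightarrow> S2 - S1 = {b} \<longrightarrow> E a b"
  proof (intro ballI allI impI)
    fix S1 S2 a b
    assume "S1 \<in> min_psd_forcing_sets V E" "S2 \<in> min_psd_forcing_sets V E" "S1 - S2 = {a}" "S2 - S1 = {b}"
    moreover have "snd (ZTE_plus V E) S1 S2 = snd (ZTS_plus V E) S1 S2"
      using eq by simp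
    ultimately show "E a b"
      by (auto simp: ZTE_plus_def ZTS_plus_def)
  qed
qed (auto simp: ZTE_plus_def ZTS_plus_def fun_eq_iff)

lemma exchanges_are_slides_if_complete_graph:
  assumes "complete_graph V E"
  shows "exchanges_are_slides V E"
  unfolding exchanges_are_slides_def
proof (intro ballI allI impI)
  fix S1 S2 a b
  assume "S1 \<in> min_psd_forcing_sets V E" "S2 \<in> min_psd_forcing_sets V E"
    and "S1 - S2 = {a}" "S2 - S1 = {b}"
  then have "a \<in> S1 - S2" "b \<in> S2 - S1" "S1 \<subseteq> V" "S2 \<subseteq> V"
    using min_psd_forcing_set_subset by simp_all
  then have "a \<in> V" "b \<in> V" "a \<noteq> b"
    by blast+
  with assms show "E a b"
    unfolding complete_graph_def by blast
qed

locale graph =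
  fixes V :: "'a set" and E :: "'a \<Rightarrow> 'a \<Rightarrow> bool"
  assumes simple_graph: "simple_graph V E"
begin

lemma finite_V: "finite V"
  using simple_graph by (simp add: simple_graph_def)

lemma edge_in_V: "E x y \<Longrightarrow> x \<in> V \<and> y \<in> V"
  using simple_graph by (simp add: simple_graph_def)

lemma edge_sym: "E x y \<Longrightarrow> E y x"
  using simple_graph by (simp add: simple_graph_def)

lemma no_loop [simp]: "\<not> E x x"
  using simple_graph by (simp add: simple_graph_def)

lemma reach_in_sym: "reach_in W E x y \<Longrightarrow> reach_in W E y x"
  unfolding reach_in_def
proof (induction rule: rtranclp_induct)
  case (step y z)
  then show ?case
    using edge_sym by (blast intro: converse_rtranclp_into_rtranclp)
qed simp

lemma complete_graph_iff_graph_iso_K: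
  "complete_graph V E \<longleftrightarrow> (\<exists>n. graph_iso V E (K_verts n) (K_edges n))"
proof -
  have K_edges_iff: "K_edges n (f x) (f y) \<longleftrightarrow> x \<noteq> y"
    if "bij_betw f V {0..<n}" "x \<in> V" "y \<in> V" for f n x y
    using that bij_betw_apply[OF that(1)] inj_on_eq_iff[OF bij_betw_imp_inj_on[OF that(1)]]
    by (auto simp: K_edges_def)
  show ?thesis
  proof
    assume "complete_graph V E"
    obtain f where f: "bij_betw f V {0..<card V}"
      using ex_bij_betw_finite_nat[OF finite_V] by blast
    then have "\<forall>x\<in>V. \<forall>y\<in>V. E x y \<longleftrightarrow> K_edges (card V) (f x) (f y)"
      using \<open>complete_graph V E\<close> K_edges_iff by (auto simp: complete_graph_def)
    with f show "\<exists>n. graph_iso V E (K_verts n) (K_edges n)"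
      unfolding graph_iso_def K_verts_def by blast
  next
    assume "\<exists>n. graph_iso V E (K_verts n) (K_edges n)"
    then show "complete_graph V E"
      unfolding complete_graph_def graph_iso_def K_verts_def using K_edges_iff by blast
  qed
qed

definition component :: "'a set \<Rightarrow> 'a \<Rightarrow> 'a set" where
  "component B w = {y. reach_in (V - B) E w y}"

lemma components_minus_iff: "C \<in> components_minus V E B \<longleftrightarrow> (\<exists>w\<in>V - B. C = component B w)"
  by (auto simp: components_minus_def component_def)

lemma component_self [simp]: "w \<in> component B w"
  by (simp add: component_def)

lemma component_subset: "w \<in> V - B \<Longrightarrow> component B w \<subseteq> V - B"
  unfolding component_def using reach_in_mem by fastforce

lemma component_edge_closed:
  assumes "w \<in> V - B" "x \<in> component B w" "y \<notin> B" "E x y"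
  shows "y \<in> component B w"
proof -
  have "x \<in> V - B" "y \<in> V - B"
    using assms component_subset edge_in_V by blast+
  then show ?thesis
    using assms(2,4) reach_in_snoc[of "V - B" E w x y] by (simp add: component_def)
qed

lemma component_eq: "x \<in> component B w \<Longrightarrow> component B x = component B w"
  unfolding component_def by (blast intro: reach_in_trans reach_in_sym)

lemma component_antimono: "B \<subseteq> B' \<Longrightarrow> component B' w \<subseteq> component B w"
  unfolding component_def by (auto intro: reach_in_mono[of "V - B'" "V - B"])

lemma component_eq_if_disjoint:
  assumes "B \<subseteq> B'" and disjoint: "component B w \<inter> B' = {}"
  shows "component B' w = component B w"
proof
  show "component B' w \<subseteq> component B w"
    using assms(1) by (rule component_antimono)
  have "reach_in (V - B') E w y" if "reach_in (V - B) E w y" for y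
    using that unfolding reach_in_def
  proof (induction rule: rtranclp_induct)
    case (step y z)
    have "y \<in> component B w" "z \<in> component B w"
      using step.hyps rtranclp.rtrancl_into_rtrancl[OF step.hyps]
      unfolding component_def reach_in_def by auto
    with step.hyps(2) disjoint show ?case
      by (blast intro: rtranclp.rtrancl_into_rtrancl[OF step.IH])
  qed simp
  then show "component B w \<subseteq> component B' w"
    by (auto simp: component_def)
qed

lemma component_isolated: "{y. E v y} \<subseteq> B \<Longrightarrow> component B v = {v}"
proof -
  assume N: "{y. E v y} \<subseteq> B"
  have "y = v" if "reach_in (V - B) E v y" for y
    using that unfolding reach_in_def
    by (induction rule: rtranclp_induct) (use N in auto)
  then show ?thesis
    by (auto simp: component_def)
qed

lemma components_minus_subset: "C \<in> components_minus V E B \<Longrightarrow> C \<subseteq> V - B"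
  using component_subset by (auto simp: components_minus_iff)

lemma components_minus_finite: "C \<in> components_minus V E B \<Longrightarrow> finite C"
  using components_minus_subset finite_V by (meson Diff_subset finite_subset)

lemma components_minus_nonempty: "C \<in> components_minus V E B \<Longrightarrow> C \<noteq> {}"
  unfolding components_minus_iff using component_self by blast

lemma components_minus_eq_component:
  "C \<in> components_minus V E B \<Longrightarrow> x \<in> C \<Longrightarrow> C = component B x"
  by (auto simp: components_minus_iff component_eq)

lemma components_minus_edge_closed:
  "C \<in> components_minus V E B \<Longrightarrow> x \<in> C \<Longrightarrow> y \<notin> B \<Longrightarrow> E x y \<Longrightarrow> y \<in> C"
  by (auto simp: components_minus_iff intro: component_edge_closed)

lemma isolated_in_components_minus:
  "v \<in> V - B \<Longrightarrow> {y. E v y} \<subseteq> B \<Longrightarrow> {v} \<in> components_minus V E B"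
  unfolding components_minus_iff using component_isolated by metis


lemma force_chain_superset:
  assumes "(psd_force_step V E)\<^sup>*\<^sup>* B B'" and "V \<subseteq> B'" and "B \<subseteq> B2"
  shows "\<exists>B''. (psd_force_step V E)\<^sup>*\<^sup>* B2 B'' \<and> V \<subseteq> B''"
  using assms(1,3)
proof (induction arbitrary: B2 rule: converse_rtranclp_induct)
  case base
  then show ?case
    using \<open>V \<subseteq> B'\<close> by blast
next
  case (step B1 B1')
  obtain C u v where C: "C \<in> components_minus V E B1" and "u \<in> B1"
    and uv: "{x. E u x} \<inter> C = {v}" and B1': "B1' = insert v B1"
    using step.hyps(1) by (auto simp: psd_force_step_def)
  show ?case
  proof (cases "v \<in> B2")
    case True
    then show ?thesis
      using step.IH step.prems B1' by blast
  next
    case False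
    have "v \<in> C"
      using uv by blast
    then have v: "v \<in> V - B2"
      using False components_minus_subset[OF C] by blast
    have "component B2 v \<subseteq> C"
      using components_minus_eq_component[OF C \<open>v \<in> C\<close>] component_antimono[OF step.prems] by blast
    then have "{x. E u x} \<inter> component B2 v = {v}"
      using uv by auto
    then have "psd_force_step V E B2 (insert v B2)"
      unfolding psd_force_step_def components_minus_iff using v \<open>u \<in> B1\<close> step.prems by blast
    moreover obtain B'' where "(psd_force_step V E)\<^sup>*\<^sup>* (insert v B2) B''" "V \<subseteq> B''"
      using step.IH[of "insert v B2"] step.prems B1' by blast
    ultimately show ?thesis
      by (meson converse_rtranclp_into_rtranclp)
  qed
qed

lemma force_chain_enters_component:
  assumes "(psd_force_step V E)\<^sup>*\<^sup>* B B'" and "V \<subseteq> B'"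
    and C: "C \<in> components_minus V E S" and "S \<subseteq> B" and "C \<inter> B = {}"
  shows "\<exists>u\<in>S. \<exists>v. {x. E u x} \<inter> C = {v}"
  using assms(1,4,5)
proof (induction rule: converse_rtranclp_induct)
  case base
  then show ?case
    using \<open>V \<subseteq> B'\<close> components_minus_subset[OF C] components_minus_nonempty[OF C] by blast
next
  case (step B1 B1')
  obtain C1 u v where C1: "C1 \<in> components_minus V E B1" and "u \<in> B1"
    and uv: "{x. E u x} \<inter> C1 = {v}" and B1': "B1' = insert v B1"
    using step.hyps(1) by (auto simp: psd_force_step_def)
  show ?case
  proof (cases "v \<in> C")
    case False
    then show ?thesis
      using step.IH step.prems B1' by blast
  next
    case True
    have "C1 = component B1 v"
      using components_minus_eq_component[OF C1] uv by blast
    also have "\<dots> = component S v"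
      using component_eq_if_disjoint step.prems components_minus_eq_component[OF C True] by simp
    also have "\<dots> = C"
      using components_minus_eq_component[OF C True] by simp
    finally have "C1 = C" .
    have "u \<in> S"
    proof (rule ccontr)
      assume "u \<notin> S"
      moreover have "E v u"
        using uv edge_sym by blast
      ultimately have "u \<in> C"
        using components_minus_edge_closed[OF C True] by blast
      then show False
        using \<open>u \<in> B1\<close> step.prems(2) by blast
    qed
    then show ?thesis
      using uv \<open>C1 = C\<close> by blast
  qed
qed

lemma psd_forcing_set_forces_into_component:
  assumes "psd_forcing_set V E S" and C: "C \<in> components_minus V E S"
  shows "\<exists>u\<in>S. \<exists>v. {x. E u x} \<inter> C = {v}"
proof -
  obtain B where "(psd_force_step V E)\<^sup>*\<^sup>* S B" "V \<subseteq> B"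
    using assms(1) by (auto simp: psd_forcing_set_def)
  moreover have "C \<inter> S = {}"
    using components_minus_subset[OF C] by blast
  ultimately show ?thesis
    using force_chain_enters_component[OF _ _ C] by blast
qed

lemma component_of_swapped_out_disjoint:
  assumes "u \<in> S" and C: "C \<in> components_minus V E S" and uv: "{x. E u x} \<inter> C = {v}"
  shows "component (insert v (S - {u})) u \<inter> C = {}"
proof -
  let ?T = "insert v (S - {u})"
  have CS: "C \<subseteq> V - S"
    using components_minus_subset[OF C] .
  have "y \<notin> C" if "reach_in (V - ?T) E u y" for y
    using that unfolding reach_in_def
  proof (induction rule: rtranclp_induct)
    case base
    show ?case
      using \<open>u \<in> S\<close> CS by blast
  next
    case (step y z)
    then have y: "y \<in> V - ?T" and "z \<notin> ?T" "E y z" "y \<notin> C"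
      by auto
    show "z \<notin> C"
    proof
      assume "z \<in> C"
      show False
      proof (cases "y = u")
        case True
        then show False
          using uv \<open>z \<in> C\<close> \<open>E y z\<close> \<open>z \<notin> ?T\<close> by auto
      next
        case False
        then have "y \<notin> S"
          using y by auto
        then have "y \<in> C"
          using components_minus_edge_closed[OF C \<open>z \<in> C\<close>] edge_sym[OF \<open>E y z\<close>] by blast
        then show False
          using \<open>y \<notin> C\<close> by contradiction
      qed
    qed
  qed
  then show ?thesis
    by (auto simp: component_def)
qed

text \<open>The exchanged vertex v forces u back, and from there on the original forcing chain of
  S \<union> {v} applies.\<close>
lemma psd_forcing_set_swap:
  assumes S: "psd_forcing_set V E S" and "u \<in> S" and C: "C \<in> components_minus V E S"
    and uv: "{x. E u x} \<inter> C = {v}"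
  shows "psd_forcing_set V E (insert v (S - {u}))"
proof -
  define T where "T = insert v (S - {u})"
  have "v \<in> C"
    using uv by blast
  have CS: "C \<subseteq> V - S"
    using components_minus_subset[OF C] .
  have "S \<subseteq> V"
    using S by (simp add: psd_forcing_set_def)
  have uT: "u \<in> V - T"
    using \<open>u \<in> S\<close> \<open>S \<subseteq> V\<close> \<open>v \<in> C\<close> CS by (auto simp: T_def)
  have "y = u" if "y \<in> component T u" "E v y" for y
  proof (rule ccontr)
    assume "y \<noteq> u"
    then have "y \<notin> S"
      using that(1) component_subset[OF uT] by (auto simp: T_def)
    then have "y \<in> C"
      using components_minus_edge_closed[OF C \<open>v \<in> C\<close>] that(2) by blast
    then show False
      using component_of_swapped_out_disjoint[OF \<open>u \<in> S\<close> C uv] that(1) by (auto simp: T_def)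
  qed
  moreover have "E v u"
    using uv edge_sym by blast
  ultimately have "{x. E v x} \<inter> component T u = {u}"
    by auto
  then have "psd_force_step V E T (insert u T)"
    unfolding psd_force_step_def components_minus_iff using uT by (auto simp: T_def)
  moreover have "insert u T = insert v S"
    using \<open>u \<in> S\<close> by (auto simp: T_def)
  moreover obtain B where "(psd_force_step V E)\<^sup>*\<^sup>* (insert v S) B" "V \<subseteq> B"
    using S force_chain_superset[of S _ "insert v S"] unfolding psd_forcing_set_def by blast
  moreover have "T \<subseteq> V"
    using \<open>S \<subseteq> V\<close> \<open>v \<in> C\<close> CS by (auto simp: T_def)
  ultimately show ?thesis
    unfolding psd_forcing_set_def T_def[symmetric] by (metis converse_rtranclp_into_rtranclp)
qed

lemma min_psd_forcing_set_swap:
  assumes S: "S \<in> min_psd_forcing_sets V E" and "u \<in> S" and C: "C \<in> components_minus V E S"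
    and uv: "{x. E u x} \<inter> C = {v}"
  shows "insert v (S - {u}) \<in> min_psd_forcing_sets V E"
proof -
  have "v \<notin> S"
    using uv components_minus_subset[OF C] by blast
  moreover have "finite S"
    using min_psd_forcing_set_subset[OF S] finite_V finite_subset by blast
  ultimately have "card (insert v (S - {u})) = card S"
    using card_Suc_Diff1[OF \<open>finite S\<close> \<open>u \<in> S\<close>] by simp
  then show ?thesis
    using S psd_forcing_set_swap[OF _ \<open>u \<in> S\<close> C uv] by (simp add: min_psd_forcing_sets_def)
qed

lemma component_after_swap_subset:
  assumes C: "C \<in> components_minus V E S" and uv: "{x. E u x} \<inter> C = {v}"
    and "z \<in> C" "z \<noteq> v"
  shows "component (insert v (S - {u})) z \<subseteq> C - {v}"
proof -
  have "y \<in> C - {v}" if "reach_in (V - insert v (S - {u})) E z y" for y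
    using that unfolding reach_in_def
  proof (induction rule: rtranclp_induct)
    case base
    show ?case
      using \<open>z \<in> C\<close> \<open>z \<noteq> v\<close> by blast
  next
    case (step y y')
    then have "y \<in> C - {v}" "y' \<notin> insert v (S - {u})" "E y y'"
      by auto
    moreover have "y' \<noteq> u"
      using uv edge_sym \<open>E y y'\<close> \<open>y \<in> C - {v}\<close> by blast
    ultimately show ?case
      using components_minus_edge_closed[OF C] by blast
  qed
  then show ?thesis
    by (auto simp: component_def)
qed

lemma isolated_white_vertex_from_component:
  assumes "S \<in> min_psd_forcing_sets V E" and "C \<in> components_minus V E S"
  shows "\<exists>S'\<in>min_psd_forcing_sets V E. \<exists>v\<in>V - S'. {y. E v y} \<subseteq> S'"
  using assms
proof (induction "card C" arbitrary: S C rule: less_induct)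
  case less
  note S = less.prems(1) and C = less.prems(2)
  obtain u v where "u \<in> S" and uv: "{x. E u x} \<inter> C = {v}"
    using psd_forcing_set_forces_into_component[OF _ C] S by (auto simp: min_psd_forcing_sets_def)
  show ?case
  proof (cases "C = {v}")
    case True
    then have "v \<in> V - S"
      using components_minus_subset[OF C] by blast
    moreover have "{y. E v y} \<subseteq> S"
      using components_minus_edge_closed[OF C] True by fastforce
    ultimately show ?thesis
      using S by blast
  next
    case False
    then obtain z where "z \<in> C" "z \<noteq> v"
      using uv by blast
    let ?T = "insert v (S - {u})"
    have "z \<in> V - ?T"
      using \<open>z \<in> C\<close> \<open>z \<noteq> v\<close> components_minus_subset[OF C] by blast
    then have "component ?T z \<in> components_minus V E ?T"
      unfolding components_minus_iff by blast
    moreover have "component ?T z \<subset> C"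
      using component_after_swap_subset[OF C uv \<open>z \<in> C\<close> \<open>z \<noteq> v\<close>] uv by blast
    then have "card (component ?T z) < card C"
      using psubset_card_mono components_minus_finite[OF C] by blast
    ultimately show ?thesis
      using less.hyps min_psd_forcing_set_swap[OF S \<open>u \<in> S\<close> C uv] by blast
  qed
qed

lemma Z_plus_less_card:
  assumes "E x y"
  shows "Z_plus V E < card V"
proof -
  have "x \<in> V" "y \<in> V" "x \<noteq> y"
    using assms edge_in_V no_loop by (blast, blast, metis)
  have "{x} \<in> components_minus V E (V - {x})"
    using isolated_in_components_minus \<open>x \<in> V\<close> edge_in_V no_loop by blast
  moreover have "{z. E y z} \<inter> {x} = {x}"
    using assms edge_sym by blast
  ultimately have "psd_force_step V E (V - {x}) V"
    unfolding psd_force_step_def using \<open>x \<in> V\<close> \<open>y \<in> V\<close> \<open>x \<noteq> y\<close> by blast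
  then have "psd_forcing_set V E (V - {x})"
    by (auto simp: psd_forcing_set_def)
  then show ?thesis
    using Z_plus_le_card finite_V \<open>x \<in> V\<close> by (meson card_Diff1_less le_less_trans)
qed

lemma isolated_white_vertex_exists:
  assumes "E x y"
  shows "\<exists>S\<in>min_psd_forcing_sets V E. \<exists>v\<in>V - S. {y. E v y} \<subseteq> S"
proof -
  obtain S where S: "S \<in> min_psd_forcing_sets V E"
    using min_psd_forcing_set_exists by blast
  have "V - S \<noteq> {}"
  proof
    assume "V - S = {}"
    then have "card V \<le> card S"
      using min_psd_forcing_set_subset[OF S] finite_V by (simp add: card_mono)
    then show False
      using Z_plus_less_card[OF assms] S by (simp add: min_psd_forcing_sets_def)
  qed
  then obtain w where "w \<in> V - S"
    by blast
  then have "component S w \<in> components_minus V E S"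
    unfolding components_minus_iff by blast
  then show ?thesis
    using isolated_white_vertex_from_component[OF S] by blast
qed


end

locale exchange_is_slide = graph +
  assumes exchanges_are_slides: "exchanges_are_slides V E"
begin

lemma exchange_adjacent:
  "S1 \<in> min_psd_forcing_sets V E \<Longrightarrow> S2 \<in> min_psd_forcing_sets V E \<Longrightarrow>
   S1 - S2 = {a} \<Longrightarrow> S2 - S1 = {b} \<Longrightarrow> E a b"
  using exchanges_are_slides unfolding exchanges_are_slides_def by blast

lemma forced_vertex_unique:
  assumes S: "S \<in> min_psd_forcing_sets V E" and "u \<in> S"
    and C1: "C1 \<in> components_minus V E S" and C2: "C2 \<in> components_minus V E S"
    and uv1: "{x. E u x} \<inter> C1 = {v1}" and uv2: "{x. E u x} \<inter> C2 = {v2}"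
  shows "v1 = v2"
proof (rule ccontr)
  assume "v1 \<noteq> v2"
  have "v1 \<in> C1" "E u v2" "v2 \<in> C2"
    using uv1 uv2 by blast+
  then have "v1 \<notin> S" "v2 \<notin> S"
    using components_minus_subset[OF C1] components_minus_subset[OF C2] by blast+
  then have "insert v1 (S - {u}) - insert v2 (S - {u}) = {v1}"
    and "insert v2 (S - {u}) - insert v1 (S - {u}) = {v2}"
    using \<open>v1 \<noteq> v2\<close> by auto
  then have "E v1 v2"
    by (rule exchange_adjacent[OF min_psd_forcing_set_swap[OF S \<open>u \<in> S\<close> C1 uv1]
          min_psd_forcing_set_swap[OF S \<open>u \<in> S\<close> C2 uv2]])
  then have "v2 \<in> C1"
    using components_minus_edge_closed[OF C1 \<open>v1 \<in> C1\<close> \<open>v2 \<notin> S\<close>] by blast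
  with \<open>E u v2\<close> have "v2 \<in> {x. E u x} \<inter> C1"
    by blast
  then show False
    using \<open>v1 \<noteq> v2\<close> by (simp add: uv1)
qed

lemma co_forcing_adjacent:
  assumes S: "S \<in> min_psd_forcing_sets V E" and "w1 \<in> S" "w2 \<in> S" "w1 \<noteq> w2"
    and C: "C \<in> components_minus V E S"
    and wv1: "{x. E w1 x} \<inter> C = {v}" and wv2: "{x. E w2 x} \<inter> C = {v}"
  shows "E w1 w2"
proof -
  have "v \<in> C"
    using wv1 by blast
  then have "v \<notin> S"
    using components_minus_subset[OF C] by blast
  then have "insert v (S - {w2}) - insert v (S - {w1}) = {w1}"
    and "insert v (S - {w1}) - insert v (S - {w2}) = {w2}"
    using \<open>w1 \<in> S\<close> \<open>w2 \<in> S\<close> \<open>w1 \<noteq> w2\<close> by auto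
  then show ?thesis
    by (rule exchange_adjacent[OF min_psd_forcing_set_swap[OF S \<open>w2 \<in> S\<close> C wv2]
          min_psd_forcing_set_swap[OF S \<open>w1 \<in> S\<close> C wv1]])
qed

lemma isolated_white_neighbourhood_clique:
  assumes S: "S \<in> min_psd_forcing_sets V E" and v: "v \<in> V - S" and N: "{x. E v x} \<subseteq> S"
    and "E v w1" "E v w2" "w1 \<noteq> w2"
  shows "E w1 w2"
proof -
  have "{x. E w1 x} \<inter> {v} = {v}" "{x. E w2 x} \<inter> {v} = {v}"
    using \<open>E v w1\<close> \<open>E v w2\<close> edge_sym by blast+
  then show ?thesis
    using co_forcing_adjacent[OF S _ _ \<open>w1 \<noteq> w2\<close> isolated_in_components_minus[OF v N]]
      N \<open>E v w1\<close> \<open>E v w2\<close> by blast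
qed

lemma isolated_white_neighbour_forces_only_it:
  assumes S: "S \<in> min_psd_forcing_sets V E" and v: "v \<in> V - S" and N: "{x. E v x} \<subseteq> S"
    and "E v a" and C: "C \<in> components_minus V E S" and ab: "{x. E a x} \<inter> C = {b}"
  shows "b = v"
proof -
  have "a \<in> S"
    using N \<open>E v a\<close> by blast
  moreover have "{x. E a x} \<inter> {v} = {v}"
    using edge_sym[OF \<open>E v a\<close>] by blast
  ultimately show ?thesis
    using forced_vertex_unique[OF S _ isolated_in_components_minus[OF v N] C _ ab] by simp
qed

text \<open>Exchange along the force into the component of y in G - S: the forcing vertex is not
  adjacent to v, so v stays isolated, and w keeps a white neighbour in a strictly smaller
  component.\<close>
lemma isolated_white_second_neighbour_descent:
  assumes S: "S \<in> min_psd_forcing_sets V E" and v: "v \<in> V - S" and N: "{x. E v x} \<subseteq> S"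
    and "E v w" "E w y" "y \<notin> S" "y \<noteq> v"
  obtains T y' where "card (component T y') < card (component S y)"
    and "T \<in> min_psd_forcing_sets V E" "v \<in> V - T" "{x. E v x} \<subseteq> T"
    and "E w y'" "y' \<notin> T" "y' \<noteq> v"
proof -
  let ?C = "component S y"
  have "y \<in> V - S"
    using edge_in_V \<open>E w y\<close> \<open>y \<notin> S\<close> by blast
  then have C: "?C \<in> components_minus V E S"
    unfolding components_minus_iff by blast
  obtain a b where "a \<in> S" and ab: "{x. E a x} \<inter> ?C = {b}"
    using psd_forcing_set_forces_into_component[OF _ C] S by (auto simp: min_psd_forcing_sets_def)
  have "v \<notin> ?C"
    using component_eq[of v S y] component_isolated[OF N] \<open>y \<noteq> v\<close> component_self by blast
  then have "b \<noteq> v"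
    using ab by blast
  have "\<not> E a v"
    using isolated_white_neighbour_forces_only_it[OF S v N _ C ab] edge_sym \<open>b \<noteq> v\<close> by blast
  have "{x. E w x} \<inter> ?C \<noteq> {b}"
    using isolated_white_neighbour_forces_only_it[OF S v N \<open>E v w\<close> C] \<open>b \<noteq> v\<close> by blast
  moreover have "y \<in> {x. E w x} \<inter> ?C"
    using \<open>E w y\<close> by simp
  ultimately obtain y' where "E w y'" "y' \<in> ?C" "y' \<noteq> b"
    by blast
  let ?T = "insert b (S - {a})"
  have "component ?T y' \<subset> ?C"
    using component_after_swap_subset[OF C ab \<open>y' \<in> ?C\<close> \<open>y' \<noteq> b\<close>] ab by blast
  then have smaller: "card (component ?T y') < card ?C"
    using psubset_card_mono components_minus_finite[OF C] by blast
  have "v \<in> V - ?T"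
    using v \<open>b \<noteq> v\<close> by blast
  moreover have "{x. E v x} \<subseteq> ?T"
    using N \<open>\<not> E a v\<close> edge_sym by blast
  moreover have "y' \<notin> ?T" "y' \<noteq> v"
    using \<open>y' \<in> ?C\<close> \<open>y' \<noteq> b\<close> \<open>v \<notin> ?C\<close> components_minus_subset[OF C] by blast+
  ultimately show ?thesis
    using that[OF smaller min_psd_forcing_set_swap[OF S \<open>a \<in> S\<close> C ab] _ _ \<open>E w y'\<close>] by blast
qed

lemma isolated_white_second_neighbour:
  assumes "S \<in> min_psd_forcing_sets V E" "v \<in> V - S" "{x. E v x} \<subseteq> S"
    and "E v w" "E w y" "y \<notin> S"
  shows "y = v"
proof (rule ccontr)
  assume "y \<noteq> v"
  with assms(1-3,5,6) show False
  proof (induction "card (component S y)" arbitrary: S y rule: less_induct)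
    case less
    obtain T y' where "card (component T y') < card (component S y)"
      and "T \<in> min_psd_forcing_sets V E" "v \<in> V - T" "{x. E v x} \<subseteq> T"
      and "E w y'" "y' \<notin> T" "y' \<noteq> v"
      using isolated_white_second_neighbour_descent[OF less.prems(1-3) \<open>E v w\<close> less.prems(4-6)] .
    then show False
      by (rule less.hyps)
  qed
qed

text \<open>Exchanging w for v turns w into an isolated white vertex, whose neighbourhood is a
  clique.\<close>
lemma isolated_white_two_step_adjacent:
  assumes S: "S \<in> min_psd_forcing_sets V E" and v: "v \<in> V - S" and N: "{x. E v x} \<subseteq> S"
    and "E v w" "E w x" "x \<noteq> v"
  shows "E v x"
proof -
  let ?S' = "insert v (S - {w})"
  have "w \<in> S"
    using N \<open>E v w\<close> by blast
  have "{x. E w x} \<inter> {v} = {v}"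
    using \<open>E v w\<close> edge_sym by blast
  then have S': "?S' \<in> min_psd_forcing_sets V E"
    using min_psd_forcing_set_swap[OF S \<open>w \<in> S\<close> isolated_in_components_minus[OF v N]] by blast
  have "w \<in> V - ?S'"
    using \<open>w \<in> S\<close> edge_in_V[OF \<open>E v w\<close>] no_loop[of v] \<open>E v w\<close> by auto
  moreover have "{y. E w y} \<subseteq> ?S'"
    using isolated_white_second_neighbour[OF S v N \<open>E v w\<close>] no_loop[of w] by blast
  ultimately show ?thesis
    using isolated_white_neighbourhood_clique[OF S' _ _ edge_sym[OF \<open>E v w\<close>] \<open>E w x\<close>]
      \<open>x \<noteq> v\<close> by blast
qed

theorem complete_graph_if_connected:
  assumes connected: "connected_graph V E"
  shows "complete_graph V E"
  unfolding complete_graph_def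
proof (intro ballI impI)
  fix x y
  assume "x \<in> V" "y \<in> V" "x \<noteq> y"
  show "E x y"
  proof (cases "\<exists>a b. E a b")
    case True
    then obtain S v where S: "S \<in> min_psd_forcing_sets V E" and v: "v \<in> V - S"
      and N: "{x. E v x} \<subseteq> S"
      using isolated_white_vertex_exists by blast
    have star: "z = v \<or> E v z" if "z \<in> V" for z
    proof -
      have "reach_in V E v z"
        using connected v that by (simp add: connected_graph_def)
      then show ?thesis
        by (rule reach_in_closed_neighbourhood) (rule isolated_white_two_step_adjacent[OF S v N])
    qed
    show ?thesis
      using star[OF \<open>x \<in> V\<close>] star[OF \<open>y \<in> V\<close>] \<open>x \<noteq> y\<close> edge_sym[of v x]
        isolated_white_neighbourhood_clique[OF S v N, of x y] by blast
  next
    case False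
    have "reach_in V E x y"
      using connected \<open>x \<in> V\<close> \<open>y \<in> V\<close> by (simp add: connected_graph_def)
    then have "y = x \<or> E x y"
      by (rule reach_in_closed_neighbourhood) (use False in blast)
    then show ?thesis
      using \<open>x \<noteq> y\<close> by blast
  qed
qed

end

theorem proposition4p12:
  fixes V :: "'a set" and E :: "'a \<Rightarrow> 'a \<Rightarrow> bool"
  assumes "connected_graph V E"
  shows "ZTE_plus V E = ZTS_plus V E \<longleftrightarrow> (\<exists>n. graph_iso V E (K_verts n) (K_edges n))"
proof -
  interpret graph V E
    using assms by unfold_locales (simp add: connected_graph_def)
  have "ZTE_plus V E = ZTS_plus V E \<longleftrightarrow> exchanges_are_slides V E"
    by (rule ZTE_plus_eq_ZTS_plus_iff)
  also have "\<dots> \<longleftrightarrow> complete_graph V E"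
  proof
    assume "exchanges_are_slides V E"
    then interpret exchange_is_slide V E
      by (rule exchange_is_slide.intro[OF graph_axioms exchange_is_slide_axioms.intro])
    show "complete_graph V E"
      using assms by (rule complete_graph_if_connected)
  qed (rule exchanges_are_slides_if_complete_graph)
  also have "\<dots> \<longleftrightarrow> (\<exists>n. graph_iso V E (K_verts n) (K_edges n))"
    by (rule complete_graph_iff_graph_iso_K)
  finally show ?thesis .
qed

end
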